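(* Let $K\ge2$, let $(X,Y)$ be a random pair with $X\in\mathbb{R}^d$, $Y\in\{1,\dots,K\}$ with arbitrary joint distribution, and let $\ell:\{1,\dots,K\}^2\to[0,\infty)$ be a task loss. Let $\alpha\in[0,1)\cup(1,\frac{K}{K-1}]$, let $\phi$ be one of $\phi_{\mathrm{LR}},\phi_{\mathrm{LS},\alpha},\phi_{\mathrm{MLS},\alpha},\phi_{\mathrm{LSQ}}$, and let $\bar g\in\operatorname{argmin}_{g:\mathbb{R}^d\to\mathbb{R}^K}\mathbb{E}[\phi(g(X),Y)]$. If $\phi\in\{\phi_{\mathrm{LR}},\phi_{\mathrm{MLS},\alpha},\phi_{\mathrm{LSQ}}\}$, define $h_\ell(v)\in\operatorname{argmin}_{l\in\{1,\dots,K\}}\sum_{k=1}^K q_{\mathrm{L},k}(v)\ell(l,k)$; if $\phi=\phi_{\mathrm{LS},\alpha}$, define $h_\ell(v)\in\operatorname{argmin}_{l\in\{1,\dots,K\}}\sum_{k=1}^K q_{\mathrm{RL},\alpha,k}(v)\ell(l,k)$. Then $\mathbb{E}[\ell(h_\ell(\bar g(X)),Y)]=\inf_{f:\mathbb{R}^d\to\{1,\dots,K\}}\mathbb{E}[\ell(f(X),Y)]$.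
   Context: Notation: $t_k(y)=\mathbb{1}(k=y)$; $s_\alpha(v)=(1-\alpha)v+\frac{\alpha}{K}$ (componentwise), with inverse $s_\alpha^{-1}(u)=(u-\frac{\alpha}{K})/(1-\alpha)$ for $\alpha\ne1$; $q_{\mathrm{L},k}(v)=e^{v_k}/\sum_{l=1}^K e^{v_l}$; $q_{\mathrm{RL},\alpha,k}(v)=s_\alpha^{-1}(q_{\mathrm{L},k}(v))$. The losses for $v\in\mathbb{R}^K$, $y\in\{1,\dots,K\}$ are $\phi_{\mathrm{LR}}(v,y)=-\sum_k t_k(y)\ln q_{\mathrm{L},k}(v)$, $\phi_{\mathrm{LS},\alpha}(v,y)=-\sum_k s_\alpha(t_k(y))\ln q_{\mathrm{L},k}(v)$, $\phi_{\mathrm{MLS},\alpha}(v,y)=-\sum_k s_\alpha(t_k(y))\ln s_\alpha(q_{\mathrm{L},k}(v))$, $\phi_{\mathrm{LSQ}}(v,y)=\sum_k(t_k(y)-q_{\mathrm{L},k}(v))^2$. Minimizations/infima are over measurable functions. *)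

theory Defs
  imports "HOL-Probability.Probability"
begin

text \<open>Scores v in R^K are represented as functions nat => real; only the
components 1..K are used. Labels are natural numbers in {1..K}.\<close>

definition tvec :: "nat \<Rightarrow> nat \<Rightarrow> real" where
  "tvec k y = (if k = y then 1 else 0)"

definition s_al :: "nat \<Rightarrow> real \<Rightarrow> real \<Rightarrow> real" where
  "s_al K \<alpha> u = (1 - \<alpha>) * u + \<alpha> / real K"

definition s_al_inv :: "nat \<Rightarrow> real \<Rightarrow> real \<Rightarrow> real" where
  "s_al_inv K \<alpha> u = (u - \<alpha> / real K) / (1 - \<alpha>)"

definition qL :: "nat \<Rightarrow> (nat \<Rightarrow> real) \<Rightarrow> nat \<Rightarrow> real" where
  "qL K v k = exp (v k) / (\<Sum>l=1..K. exp (v l))"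

definition qRL :: "nat \<Rightarrow> real \<Rightarrow> (nat \<Rightarrow> real) \<Rightarrow> nat \<Rightarrow> real" where
  "qRL K \<alpha> v k = s_al_inv K \<alpha> (qL K v k)"

definition phi_LR :: "nat \<Rightarrow> (nat \<Rightarrow> real) \<Rightarrow> nat \<Rightarrow> real" where
  "phi_LR K v y = - (\<Sum>k=1..K. tvec k y * ln (qL K v k))"

definition phi_LS :: "nat \<Rightarrow> real \<Rightarrow> (nat \<Rightarrow> real) \<Rightarrow> nat \<Rightarrow> real" where
  "phi_LS K \<alpha> v y = - (\<Sum>k=1..K. s_al K \<alpha> (tvec k y) * ln (qL K v k))"

definition phi_MLS :: "nat \<Rightarrow> real \<Rightarrow> (nat \<Rightarrow> real) \<Rightarrow> nat \<Rightarrow> real" where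
  "phi_MLS K \<alpha> v y = - (\<Sum>k=1..K. s_al K \<alpha> (tvec k y) * ln (s_al K \<alpha> (qL K v k)))"

definition phi_LSQ :: "nat \<Rightarrow> (nat \<Rightarrow> real) \<Rightarrow> nat \<Rightarrow> real" where
  "phi_LSQ K v y = (\<Sum>k=1..K. (tvec k y - qL K v k)\<^sup>2)"

datatype loss_kind = LR | LS | MLS | LSQ

fun phi :: "loss_kind \<Rightarrow> nat \<Rightarrow> real \<Rightarrow> (nat \<Rightarrow> real) \<Rightarrow> nat \<Rightarrow> real" where
  "phi LR K \<alpha> = phi_LR K"
| "phi LS K \<alpha> = phi_LS K \<alpha>"
| "phi MLS K \<alpha> = phi_MLS K \<alpha>"
| "phi LSQ K \<alpha> = phi_LSQ K"

fun qdec :: "loss_kind \<Rightarrow> nat \<Rightarrow> real \<Rightarrow> (nat \<Rightarrow> real) \<Rightarrow> nat \<Rightarrow> real" where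
  "qdec LS K \<alpha> = qRL K \<alpha>"
| "qdec LR K \<alpha> = qL K"
| "qdec MLS K \<alpha> = qL K"
| "qdec LSQ K \<alpha> = qL K"

definition score_fns :: "nat \<Rightarrow> (real^'d \<Rightarrow> nat \<Rightarrow> real) set" where
  "score_fns K = {g. \<forall>k\<in>{1..K}. (\<lambda>x. g x k) \<in> borel_measurable borel}"

definition classifiers :: "nat \<Rightarrow> (real^'d \<Rightarrow> nat) set" where
  "classifiers K = {f. f \<in> borel \<rightarrow>\<^sub>M count_space UNIV \<and> (\<forall>x. f x \<in> {1..K})}"

end

(*
  Disintegrating along the law of X with the conditional label probabilities
  eta(x) = P(Y = . | X = x), every surrogate risk becomes the integral of a conditional
  risk C(eta(x), g(x)).  For each of the four losses, C(eta, v) strictly decreases when the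
  softmax output q_L(v) is moved halfway towards its target (s_alpha(eta) for label smoothing,
  eta otherwise): for the logarithmic losses by the strict concavity of ln, for the squared
  loss directly.  Moving gbar on the set where it misses the target would therefore lower
  its finite surrogate risk unless that set is null, so q_L(gbar(x)) hits the target for
  almost every x.  Then the probabilities used by h_ell are exactly eta(x) (q_RL undoes the
  smoothing), so h_ell(gbar(x)) minimises the conditional task risk almost everywhere,
  which gives the minimal task risk among all classifiers.
*)

theory Submission
  imports Defs
begin

section \<open>Label smoothing, softmax and the surrogate losses\<close>

text \<open>The bound \<open>\<alpha> \<le> K / (K - 1)\<close> says precisely that \<open>s_al K \<alpha> 1 \<ge> 0\<close>, i.e. that smoothed
  one-hot labels are still probability vectors.\<close>
definition admissible_smoothing :: "nat \<Rightarrow> real \<Rightarrow> bool" where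
  "admissible_smoothing K \<alpha> \<longleftrightarrow> (0 \<le> \<alpha> \<and> \<alpha> < 1) \<or> (1 < \<alpha> \<and> \<alpha> \<le> real K / (real K - 1))"

lemma admissible_smoothing_ne_1: "admissible_smoothing K \<alpha> \<Longrightarrow> \<alpha> \<noteq> 1"
  by (auto simp: admissible_smoothing_def)

lemma s_al_affine: "s_al K \<alpha> u = (1 - u) * s_al K \<alpha> 0 + u * s_al K \<alpha> 1"
  by (cases "K = 0") (simp_all add: s_al_def field_simps)

lemma s_al_0_1_bounds:
  assumes \<alpha>: "admissible_smoothing K \<alpha>" and K: "K \<ge> 2"
  shows "0 \<le> s_al K \<alpha> 0" "s_al K \<alpha> 0 \<le> 1" "0 \<le> s_al K \<alpha> 1" "s_al K \<alpha> 1 \<le> 1"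
proof -
  have K': "real K - 1 \<ge> 1"
    using K by simp
  have \<alpha>_nonneg: "0 \<le> \<alpha>" and \<alpha>_le: "\<alpha> * (real K - 1) \<le> real K"
  proof -
    show "0 \<le> \<alpha>" using \<alpha> by (auto simp: admissible_smoothing_def)
    show "\<alpha> * (real K - 1) \<le> real K"
    proof (cases "\<alpha> < 1")
      case True
      then have "\<alpha> * (real K - 1) \<le> 1 * (real K - 1)"
        using K' by (intro mult_right_mono) auto
      then show ?thesis by simp
    next
      case False
      then have "\<alpha> \<le> real K / (real K - 1)"
        using \<alpha> by (auto simp: admissible_smoothing_def)
      then show ?thesis
        using K' by (simp add: pos_le_divide_eq)
    qed
  qed
  have "\<alpha> \<le> \<alpha> * (real K - 1)"
    using \<alpha>_nonneg K' mult_left_mono[of 1 "real K - 1" \<alpha>] by simp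
  then show "0 \<le> s_al K \<alpha> 0" "s_al K \<alpha> 0 \<le> 1" "0 \<le> s_al K \<alpha> 1" "s_al K \<alpha> 1 \<le> 1"
    using \<alpha>_nonneg \<alpha>_le K by (simp_all add: s_al_def field_simps)
qed

lemma s_al_bounds:
  assumes "admissible_smoothing K \<alpha>" "K \<ge> 2" "0 \<le> u" "u \<le> 1"
  shows s_al_nonneg: "0 \<le> s_al K \<alpha> u" and s_al_le_1: "s_al K \<alpha> u \<le> 1"
proof -
  note s = s_al_0_1_bounds[OF assms(1,2)]
  show "0 \<le> s_al K \<alpha> u"
    using s assms(3,4) by (subst s_al_affine) simp
  have "(1 - u) * s_al K \<alpha> 0 + u * s_al K \<alpha> 1 \<le> (1 - u) * 1 + u * 1"
    using s assms(3,4) by (intro add_mono mult_left_mono) auto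
  then show "s_al K \<alpha> u \<le> 1"
    by (subst s_al_affine) simp
qed

lemma s_al_pos:
  assumes \<alpha>: "admissible_smoothing K \<alpha>" and K: "K \<ge> 2" and u: "0 < u" "u < 1"
  shows "0 < s_al K \<alpha> u"
proof -
  note s = s_al_0_1_bounds[OF \<alpha> K]
  have "s_al K \<alpha> 1 - s_al K \<alpha> 0 = 1 - \<alpha>"
    by (simp add: s_al_def)
  then have "s_al K \<alpha> 0 \<noteq> 0 \<or> s_al K \<alpha> 1 \<noteq> 0"
    using admissible_smoothing_ne_1[OF \<alpha>] by auto
  then show ?thesis
    using s u by (subst s_al_affine) (auto simp: add_pos_nonneg add_nonneg_pos)
qed

lemma sum_s_al_eq_1:
  assumes "K \<ge> 1" and "(\<Sum>j=1..K. p j) = 1"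
  shows "(\<Sum>j=1..K. s_al K \<alpha> (p j)) = 1"
  using assms by (simp add: s_al_def sum.distrib flip: sum_distrib_left)

lemma s_al_midpoint: "s_al K \<alpha> ((a + b) / 2) = (s_al K \<alpha> a + s_al K \<alpha> b) / 2"
  by (simp add: s_al_def field_simps)

lemma s_al_inv_s_al: "\<alpha> \<noteq> 1 \<Longrightarrow> s_al_inv K \<alpha> (s_al K \<alpha> u) = u"
  by (simp add: s_al_def s_al_inv_def)

lemma qL_pos: "K \<ge> 1 \<Longrightarrow> 0 < qL K v k"
  unfolding qL_def by (intro divide_pos_pos) (auto intro!: sum_pos)

lemma sum_qL:
  assumes "K \<ge> 1"
  shows "(\<Sum>k=1..K. qL K v k) = 1"
proof -
  have "(\<Sum>k=1..K. exp (v k)) > 0"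
    using assms by (intro sum_pos) auto
  then show ?thesis
    by (simp add: qL_def flip: sum_divide_distrib)
qed

lemma qL_less_1:
  assumes K: "K \<ge> 2" and k: "k \<in> {1..K}"
  shows "qL K v k < 1"
proof -
  define j where "j = (if k = 1 then 2 else (1::nat))"
  have j: "j \<in> {1..K}" "j \<noteq> k"
    using K k by (auto simp: j_def)
  have "qL K v k + qL K v j = (\<Sum>l\<in>{k, j}. qL K v l)"
    using j by simp
  also have "\<dots> \<le> (\<Sum>l=1..K. qL K v l)"
    using j k K qL_pos[of K v] by (intro sum_mono2) (auto intro: less_imp_le)
  finally show ?thesis
    using sum_qL[of K v] qL_pos[of K v j] K by simp
qed

lemma qL_ln:
  assumes "K \<ge> 1" and r: "\<And>j. j \<in> {1..K} \<Longrightarrow> 0 < r j" and "(\<Sum>j=1..K. r j) = 1"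
    and "k \<in> {1..K}"
  shows "qL K (\<lambda>j. ln (r j)) k = r k"
proof -
  have "(\<Sum>l=1..K. exp (ln (r l))) = 1"
    using assms by (simp add: r)
  then show ?thesis
    using assms by (simp add: qL_def)
qed

lemma borel_measurable_qL:
  assumes "\<And>k. k \<in> {1..K} \<Longrightarrow> (\<lambda>x. g x k) \<in> borel_measurable N" and "j \<in> {1..K}"
  shows "(\<lambda>x. qL K (g x) j) \<in> borel_measurable N"
  unfolding qL_def using assms by (intro borel_measurable_divide borel_measurable_sum) auto

lemma borel_measurable_phi:
  assumes g: "\<And>k. k \<in> {1..K} \<Longrightarrow> (\<lambda>x. g x k) \<in> borel_measurable N"
  shows "(\<lambda>x. phi kind K \<alpha> (g x) y) \<in> borel_measurable N"
proof -
  note [measurable] = borel_measurable_qL[OF g]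
  show ?thesis
    by (cases kind) (auto simp: phi_LR_def phi_LS_def phi_MLS_def phi_LSQ_def s_al_def
        intro!: borel_measurable_sum)
qed

lemma phi_nonneg:
  assumes \<alpha>: "admissible_smoothing K \<alpha>" and K: "K \<ge> 2"
  shows "0 \<le> phi kind K \<alpha> v k"
proof -
  have q: "0 < qL K v j" "qL K v j < 1" if "j \<in> {1..K}" for j
    using qL_pos[of K v j] qL_less_1[OF K that] K by auto
  then have "ln (qL K v j) \<le> 0" if "j \<in> {1..K}" for j
    using that by (simp add: less_imp_le)
  moreover have t: "0 \<le> tvec j k" "tvec j k \<le> 1" for j
    by (auto simp: tvec_def)
  moreover have s: "0 \<le> s_al K \<alpha> (tvec j k)" for j
    using s_al_nonneg[OF \<alpha> K t] .
  moreover have "ln (s_al K \<alpha> (qL K v j)) \<le> 0" if "j \<in> {1..K}" for j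
    using s_al_pos[OF \<alpha> K q[OF that]] s_al_le_1[OF \<alpha> K] q[OF that] by simp
  ultimately show ?thesis
    by (cases kind)
      (auto simp: phi_LR_def phi_LS_def phi_MLS_def phi_LSQ_def
        intro!: sum_nonpos sum_nonneg mult_nonneg_nonpos)
qed

section \<open>Conditional surrogate risk\<close>

definition cond_risk :: "loss_kind \<Rightarrow> nat \<Rightarrow> real \<Rightarrow> (nat \<Rightarrow> real) \<Rightarrow> (nat \<Rightarrow> real) \<Rightarrow> real" where
  "cond_risk kind K \<alpha> p v = (\<Sum>k=1..K. p k * phi kind K \<alpha> v k)"

text \<open>The softmax output that minimises \<open>cond_risk\<close>: label smoothing fits the smoothed label
  distribution, the other losses fit the label distribution itself.\<close>
definition target_probs :: "loss_kind \<Rightarrow> nat \<Rightarrow> real \<Rightarrow> (nat \<Rightarrow> real) \<Rightarrow> nat \<Rightarrow> real" where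
  "target_probs kind K \<alpha> p j = (if kind = LS then s_al K \<alpha> (p j) else p j)"

lemma s_al_zero [simp]: "s_al K 0 u = u"
  by (simp add: s_al_def)

lemma sum_mult_tvec:
  assumes "j \<in> {1..K}"
  shows "(\<Sum>k=1..K. p k * tvec j k) = p j"
proof -
  have "(\<Sum>k=1..K. p k * tvec j k) = (\<Sum>k\<in>{1..K}. if k = j then p k else 0)"
    by (intro sum.cong) (auto simp: tvec_def)
  then show ?thesis
    using assms by simp
qed

lemma sum_mult_s_al_tvec:
  assumes "(\<Sum>k=1..K. p k) = 1" and "j \<in> {1..K}"
  shows "(\<Sum>k=1..K. p k * s_al K \<alpha> (tvec j k)) = s_al K \<alpha> (p j)"
proof -
  have "p k * s_al K \<alpha> (tvec j k) = (1 - \<alpha>) * (p k * tvec j k) + \<alpha> / K * p k" for k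
    by (simp add: s_al_def algebra_simps)
  then have "(\<Sum>k=1..K. p k * s_al K \<alpha> (tvec j k))
      = (1 - \<alpha>) * (\<Sum>k=1..K. p k * tvec j k) + \<alpha> / K * (\<Sum>k=1..K. p k)"
    by (simp only: sum.distrib sum_distrib_left)
  then show ?thesis
    using assms(1) sum_mult_tvec[OF assms(2), of p] by (simp add: s_al_def)
qed

lemma sum_mult_smoothed_label_sum:
  assumes "(\<Sum>k=1..K. p k) = 1"
  shows "(\<Sum>k=1..K. p k * (\<Sum>j=1..K. s_al K \<alpha> (tvec j k) * L j))
       = (\<Sum>j=1..K. s_al K \<alpha> (p j) * L j)"
proof -
  have "(\<Sum>k=1..K. p k * (\<Sum>j=1..K. s_al K \<alpha> (tvec j k) * L j))
      = (\<Sum>j=1..K. (\<Sum>k=1..K. p k * s_al K \<alpha> (tvec j k)) * L j)"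
    by (simp add: sum_distrib_left sum_distrib_right mult_ac) (rule sum.swap)
  also have "\<dots> = (\<Sum>j=1..K. s_al K \<alpha> (p j) * L j)"
    by (rule sum.cong[OF refl], subst sum_mult_s_al_tvec[OF assms]) auto
  finally show ?thesis .
qed

lemma phi_LR_eq_phi_LS_0: "phi_LR K = phi_LS K 0"
  by (simp add: fun_eq_iff phi_LR_def phi_LS_def s_al_def)

lemma cond_risk_LS:
  assumes "(\<Sum>k=1..K. p k) = 1"
  shows "cond_risk LS K \<alpha> p v = - (\<Sum>j=1..K. s_al K \<alpha> (p j) * ln (qL K v j))"
  using sum_mult_smoothed_label_sum[OF assms, of \<alpha> "\<lambda>j. ln (qL K v j)"]
  by (simp add: cond_risk_def phi_LS_def sum_negf)

lemma cond_risk_log: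
  assumes "kind \<in> {LR, LS}" and "(\<Sum>k=1..K. p k) = 1"
  shows "cond_risk kind K \<alpha> p v = - (\<Sum>j=1..K. target_probs kind K \<alpha> p j * ln (qL K v j))"
proof -
  have "cond_risk LR K \<alpha> p v = cond_risk LS K 0 p v"
    by (simp add: cond_risk_def phi_LR_eq_phi_LS_0)
  then show ?thesis
    using assms cond_risk_LS[OF assms(2)] by (auto simp: target_probs_def)
qed

lemma cond_risk_MLS:
  assumes "(\<Sum>k=1..K. p k) = 1"
  shows "cond_risk MLS K \<alpha> p v = - (\<Sum>j=1..K. s_al K \<alpha> (p j) * ln (s_al K \<alpha> (qL K v j)))"
  using sum_mult_smoothed_label_sum[OF assms, of \<alpha> "\<lambda>j. ln (s_al K \<alpha> (qL K v j))"]
  by (simp add: cond_risk_def phi_MLS_def sum_negf)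

lemma cond_risk_LSQ:
  assumes "(\<Sum>k=1..K. p k) = 1"
  shows "cond_risk LSQ K \<alpha> p v = (\<Sum>j=1..K. (qL K v j - p j)\<^sup>2 + (p j - (p j)\<^sup>2))"
proof -
  let ?q = "qL K v"
  have "(tvec j k - ?q j)\<^sup>2 = tvec j k * (1 - 2 * ?q j) + (?q j)\<^sup>2" for j k
    by (simp add: tvec_def power2_eq_square algebra_simps)
  then have "cond_risk LSQ K \<alpha> p v
      = (\<Sum>k=1..K. p k * (\<Sum>j=1..K. tvec j k * (1 - 2 * ?q j))) + (\<Sum>j=1..K. (?q j)\<^sup>2)"
    using assms
    by (simp add: cond_risk_def phi_LSQ_def sum.distrib distrib_left flip: sum_distrib_right)
  also have "\<dots> = (\<Sum>j=1..K. p j * (1 - 2 * ?q j)) + (\<Sum>j=1..K. (?q j)\<^sup>2)"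
    using sum_mult_smoothed_label_sum[OF assms, of 0 "\<lambda>j. 1 - 2 * ?q j"]
    by (simp add: s_al_def)
  also have "\<dots> = (\<Sum>j=1..K. (?q j - p j)\<^sup>2 + (p j - (p j)\<^sup>2))"
    by (simp add: power2_eq_square algebra_simps flip: sum.distrib)
  finally show ?thesis .
qed

lemma cond_risk_nonneg:
  assumes "admissible_smoothing K \<alpha>" and "K \<ge> 2" and "\<And>k. k \<in> {1..K} \<Longrightarrow> 0 \<le> p k"
  shows "0 \<le> cond_risk kind K \<alpha> p v"
  unfolding cond_risk_def using assms phi_nonneg[OF assms(1,2)] by (auto intro!: sum_nonneg)

text \<open>This is \<open>ln x \<le> x - 1\<close> at \<open>x = 2 r / (p + r)\<close>, rearranged.\<close>
lemma mult_ln_le_mult_ln_midpoint: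
  fixes p r :: real
  assumes p: "0 \<le> p" and r: "0 < r"
  shows "p * ln r + (p - r) / 2 + (p - r)\<^sup>2 / (2 * (p + r)) \<le> p * ln ((p + r) / 2)"
proof -
  have pr: "0 < p + r"
    using p r by simp
  have "ln r - ln ((p + r) / 2) = ln (r / ((p + r) / 2))"
    using r pr by (intro ln_divide_pos[symmetric]) auto
  also have "\<dots> \<le> r / ((p + r) / 2) - 1"
    using r pr by (intro ln_le_minus_one) simp
  finally have "p * (ln r - ln ((p + r) / 2)) \<le> p * (r / ((p + r) / 2) - 1)"
    using p by (rule mult_left_mono)
  moreover have "p * (r / ((p + r) / 2) - 1) = - ((p - r) / 2 + (p - r)\<^sup>2 / (2 * (p + r)))"
    using pr by (simp add: field_simps power2_eq_square)
  ultimately show ?thesis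
    by (simp add: algebra_simps)
qed

lemma cross_entropy_midpoint_less:
  fixes p r :: "nat \<Rightarrow> real"
  assumes I: "finite I" and p: "\<And>j. j \<in> I \<Longrightarrow> 0 \<le> p j" and r: "\<And>j. j \<in> I \<Longrightarrow> 0 < r j"
    and sum_eq: "(\<Sum>j\<in>I. p j) = (\<Sum>j\<in>I. r j)" and ne: "\<exists>j\<in>I. p j \<noteq> r j"
  shows "(\<Sum>j\<in>I. p j * ln (r j)) < (\<Sum>j\<in>I. p j * ln ((p j + r j) / 2))"
proof -
  have gap: "0 \<le> (p j - r j)\<^sup>2 / (2 * (p j + r j))" "p j \<noteq> r j \<Longrightarrow> 0 < (p j - r j)\<^sup>2 / (2 * (p j + r j))"
    if "j \<in> I" for j
    using p[OF that] r[OF that] by (auto intro!: divide_nonneg_pos divide_pos_pos)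
  have "(\<Sum>j\<in>I. p j * ln (r j)) = (\<Sum>j\<in>I. p j * ln (r j) + (p j - r j) / 2)"
    using sum_eq by (simp add: sum.distrib sum_subtractf flip: sum_divide_distrib)
  also have "\<dots> < (\<Sum>j\<in>I. p j * ln ((p j + r j) / 2))"
  proof (rule sum_strict_mono_ex1[OF I])
    show "\<forall>j\<in>I. p j * ln (r j) + (p j - r j) / 2 \<le> p j * ln ((p j + r j) / 2)"
    proof
      fix j assume j: "j \<in> I"
      show "p j * ln (r j) + (p j - r j) / 2 \<le> p j * ln ((p j + r j) / 2)"
        using mult_ln_le_mult_ln_midpoint[OF p[OF j] r[OF j]] gap(1)[OF j] by linarith
    qed
    from ne obtain j where j: "j \<in> I" "p j \<noteq> r j"
      by blast
    have "p j * ln (r j) + (p j - r j) / 2 < p j * ln ((p j + r j) / 2)"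
      using mult_ln_le_mult_ln_midpoint[OF p[OF j(1)] r[OF j(1)]] gap(2)[OF j] by linarith
    with j show "\<exists>j\<in>I. p j * ln (r j) + (p j - r j) / 2 < p j * ln ((p j + r j) / 2)"
      by blast
  qed
  finally show ?thesis .
qed

lemma le_1_if_sum_eq_1:
  fixes p :: "'a \<Rightarrow> real"
  assumes "finite I" and "\<And>j. j \<in> I \<Longrightarrow> 0 \<le> p j" and "sum p I = 1" and "j \<in> I"
  shows "p j \<le> 1"
  using assms member_le_sum[of j I p] by simp

lemma target_probs_nonneg:
  assumes \<alpha>: "admissible_smoothing K \<alpha>" and K: "K \<ge> 2"
    and p: "\<And>j. j \<in> {1..K} \<Longrightarrow> 0 \<le> p j" and sum_p: "(\<Sum>j=1..K. p j) = 1" and j: "j \<in> {1..K}"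
  shows "0 \<le> target_probs kind K \<alpha> p j"
proof -
  have "p j \<le> 1"
    using le_1_if_sum_eq_1[OF _ p sum_p j] by simp
  then show ?thesis
    using s_al_nonneg[OF \<alpha> K p[OF j]] p[OF j] by (simp add: target_probs_def)
qed

lemma target_probs_eq_self: "kind \<noteq> LS \<Longrightarrow> target_probs kind K \<alpha> p = p"
  by (simp add: fun_eq_iff target_probs_def)

lemma sum_qdec_mult_if_calibrated:
  assumes "\<alpha> \<noteq> 1" and "\<forall>j\<in>{1..K}. qL K v j = target_probs kind K \<alpha> p j"
  shows "(\<Sum>k=1..K. qdec kind K \<alpha> v k * L k) = (\<Sum>k=1..K. p k * L k)"
proof (rule sum.cong[OF refl])
  fix k assume "k \<in> {1..K}"
  with assms show "qdec kind K \<alpha> v k * L k = p k * L k"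
    by (cases kind) (simp_all add: target_probs_def qRL_def s_al_inv_s_al)
qed

lemma sum_target_probs:
  assumes "K \<ge> 1" and "(\<Sum>j=1..K. p j) = 1"
  shows "(\<Sum>j=1..K. target_probs kind K \<alpha> p j) = 1"
  using assms sum_s_al_eq_1[OF assms] by (cases "kind = LS") (simp_all add: target_probs_def)

definition midpoint_scores :: "nat \<Rightarrow> (nat \<Rightarrow> real) \<Rightarrow> (nat \<Rightarrow> real) \<Rightarrow> nat \<Rightarrow> real" where
  "midpoint_scores K v t j = ln ((qL K v j + t j) / 2)"

lemma sum_qL_midpoint_scores:
  assumes K: "K \<ge> 1" and t: "\<And>j. j \<in> {1..K} \<Longrightarrow> 0 \<le> t j" and sum_t: "(\<Sum>j=1..K. t j) = 1"
  shows "(\<Sum>j=1..K. f j (qL K (midpoint_scores K v t) j)) = (\<Sum>j=1..K. f j ((qL K v j + t j) / 2))"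
proof (rule sum.cong[OF refl])
  fix j assume j: "j \<in> {1..K}"
  have "qL K (midpoint_scores K v t) j = (qL K v j + t j) / 2"
    unfolding midpoint_scores_def
  proof (rule qL_ln[OF K _ _ j])
    show "0 < (qL K v i + t i) / 2" if "i \<in> {1..K}" for i
      using qL_pos[OF K, of v i] t[OF that] by simp
    show "(\<Sum>i=1..K. (qL K v i + t i) / 2) = 1"
      using sum_qL[OF K, of v] sum_t by (simp add: sum.distrib flip: sum_divide_distrib)
  qed
  then show "f j (qL K (midpoint_scores K v t) j) = f j ((qL K v j + t j) / 2)"
    by (rule arg_cong)
qed

lemma cond_risk_log_midpoint_less:
  assumes kind: "kind \<in> {LR, LS}" and \<alpha>: "admissible_smoothing K \<alpha>" and K: "K \<ge> 2"
    and p: "\<And>j. j \<in> {1..K} \<Longrightarrow> 0 \<le> p j" and sum_p: "(\<Sum>j=1..K. p j) = 1"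
    and ne: "\<exists>j\<in>{1..K}. qL K v j \<noteq> target_probs kind K \<alpha> p j"
  shows "cond_risk kind K \<alpha> p (midpoint_scores K v (target_probs kind K \<alpha> p)) < cond_risk kind K \<alpha> p v"
proof -
  let ?t = "target_probs kind K \<alpha> p" and ?q = "qL K v"
  have K1: "K \<ge> 1"
    using K by simp
  obtain j0 where "j0 \<in> {1..K}" "?t j0 \<noteq> ?q j0"
    using ne by force
  then have "(\<Sum>j=1..K. ?t j * ln (?q j)) < (\<Sum>j=1..K. ?t j * ln ((?t j + ?q j) / 2))"
    using target_probs_nonneg[OF \<alpha> K p sum_p] qL_pos[OF K1] sum_target_probs[OF K1 sum_p] sum_qL[OF K1]
    by (intro cross_entropy_midpoint_less) auto
  then show ?thesis
    using kind sum_qL_midpoint_scores[OF K1 target_probs_nonneg[OF \<alpha> K p sum_p]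
        sum_target_probs[OF K1 sum_p], of "\<lambda>j x. ?t j * ln x"]
    by (simp add: cond_risk_log[OF _ sum_p] add.commute)
qed

lemma cond_risk_MLS_midpoint_less:
  assumes \<alpha>: "admissible_smoothing K \<alpha>" and K: "K \<ge> 2"
    and p: "\<And>j. j \<in> {1..K} \<Longrightarrow> 0 \<le> p j" and sum_p: "(\<Sum>j=1..K. p j) = 1"
    and ne: "\<exists>j\<in>{1..K}. qL K v j \<noteq> p j"
  shows "cond_risk MLS K \<alpha> p (midpoint_scores K v p) < cond_risk MLS K \<alpha> p v"
proof -
  let ?sp = "\<lambda>j. s_al K \<alpha> (p j)" and ?sq = "\<lambda>j. s_al K \<alpha> (qL K v j)"
  have K1: "K \<ge> 1"
    using K by simp
  have "(\<Sum>j=1..K. ?sp j * ln (?sq j)) < (\<Sum>j=1..K. ?sp j * ln ((?sp j + ?sq j) / 2))"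
  proof (rule cross_entropy_midpoint_less)
    show "0 \<le> ?sp j" if "j \<in> {1..K}" for j
      using s_al_nonneg[OF \<alpha> K p[OF that] le_1_if_sum_eq_1[OF _ p sum_p that]] by simp
    show "0 < ?sq j" if "j \<in> {1..K}" for j
      using s_al_pos[OF \<alpha> K qL_pos[OF K1] qL_less_1[OF K that]] .
    show "(\<Sum>j=1..K. ?sp j) = (\<Sum>j=1..K. ?sq j)"
      using sum_s_al_eq_1[OF K1 sum_p] sum_s_al_eq_1[OF K1 sum_qL[OF K1]] by simp
    from ne obtain j where j: "j \<in> {1..K}" "qL K v j \<noteq> p j"
      by blast
    then have "?sp j \<noteq> ?sq j"
      using s_al_inv_s_al[OF admissible_smoothing_ne_1[OF \<alpha>]] by metis
    with j show "\<exists>j\<in>{1..K}. ?sp j \<noteq> ?sq j"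
      by blast
  qed simp
  then show ?thesis
    using sum_qL_midpoint_scores[OF K1 p sum_p, of "\<lambda>j x. ?sp j * ln (s_al K \<alpha> x)"]
    by (simp add: cond_risk_MLS[OF sum_p] s_al_midpoint add.commute)
qed

lemma cond_risk_LSQ_midpoint_less:
  assumes K: "K \<ge> 1"
    and p: "\<And>j. j \<in> {1..K} \<Longrightarrow> 0 \<le> p j" and sum_p: "(\<Sum>j=1..K. p j) = 1"
    and ne: "\<exists>j\<in>{1..K}. qL K v j \<noteq> p j"
  shows "cond_risk LSQ K \<alpha> p (midpoint_scores K v p) < cond_risk LSQ K \<alpha> p v"
proof -
  let ?q = "qL K v"
  have "(?q j + p j) / 2 - p j = (?q j - p j) / 2" for j
    by (simp add: field_simps)
  then have "cond_risk LSQ K \<alpha> p (midpoint_scores K v p)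
      = (\<Sum>j=1..K. ((?q j - p j) / 2)\<^sup>2 + (p j - (p j)\<^sup>2))"
    using sum_qL_midpoint_scores[OF K p sum_p, of "\<lambda>j x. (x - p j)\<^sup>2 + (p j - (p j)\<^sup>2)"]
    by (simp add: cond_risk_LSQ[OF sum_p])
  also have "\<dots> = (\<Sum>j=1..K. (?q j - p j)\<^sup>2) / 4 + (\<Sum>j=1..K. p j - (p j)\<^sup>2)"
    by (simp add: sum.distrib power_divide flip: sum_divide_distrib)
  also have "\<dots> < (\<Sum>j=1..K. (?q j - p j)\<^sup>2) + (\<Sum>j=1..K. p j - (p j)\<^sup>2)"
    using ne by (auto intro!: sum_pos2)
  also have "\<dots> = cond_risk LSQ K \<alpha> p v"
    by (simp add: cond_risk_LSQ[OF sum_p] sum.distrib)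
  finally show ?thesis .
qed

lemma cond_risk_midpoint_less:
  assumes \<alpha>: "admissible_smoothing K \<alpha>" and K: "K \<ge> 2"
    and p: "\<And>j. j \<in> {1..K} \<Longrightarrow> 0 \<le> p j" and sum_p: "(\<Sum>j=1..K. p j) = 1"
    and ne: "\<exists>j\<in>{1..K}. qL K v j \<noteq> target_probs kind K \<alpha> p j"
  shows "cond_risk kind K \<alpha> p (midpoint_scores K v (target_probs kind K \<alpha> p)) < cond_risk kind K \<alpha> p v"
proof (cases kind)
  case MLS
  then show ?thesis
    using cond_risk_MLS_midpoint_less[OF \<alpha> K p sum_p] ne by (simp add: target_probs_eq_self)
next
  case LSQ
  then show ?thesis
    using cond_risk_LSQ_midpoint_less[OF _ p sum_p] K ne by (simp add: target_probs_eq_self)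
qed (use cond_risk_log_midpoint_less[OF _ \<alpha> K p sum_p ne] in auto)

section \<open>Conditional label probabilities\<close>

lemma absolutely_continuous_distr_density:
  assumes X: "X \<in> M \<rightarrow>\<^sub>M N" and f: "f \<in> borel_measurable M"
  shows "absolutely_continuous (distr M N X) (distr (density M f) N X)"
  unfolding absolutely_continuous_def
proof
  fix A assume "A \<in> null_sets (distr M N X)"
  then have A: "A \<in> sets N" "X -` A \<inter> space M \<in> null_sets M"
    using X by (auto simp: null_sets_distr_iff)
  then have "AE \<omega> in M. \<omega> \<in> X -` A \<inter> space M \<longrightarrow> f \<omega> = 0"
    using AE_not_in by fastforce
  then have "X -` A \<inter> space M \<in> null_sets (density M f)"
    using A f by (simp add: null_sets_density_iff null_setsD2)
  then show "A \<in> null_sets (distr (density M f) N X)"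
    using A X by (simp add: null_sets_distr_iff)
qed

text \<open>The density of the law of X on the event Y = k with respect to the law of X,
  i.e. the conditional probability P(Y = k | X = x) as an extended real.\<close>
definition label_RN_deriv ::
    "'w measure \<Rightarrow> ('w \<Rightarrow> 'a) \<Rightarrow> 'a measure \<Rightarrow> ('w \<Rightarrow> nat) \<Rightarrow> nat \<Rightarrow> 'a \<Rightarrow> ennreal" where
  "label_RN_deriv M X N Y k =
     RN_deriv (distr M N X) (distr (density M (indicator (Y -` {k} \<inter> space M))) N X)"

lemma borel_measurable_label_RN_deriv [measurable]: "label_RN_deriv M X N Y k \<in> borel_measurable N"
  unfolding label_RN_deriv_def
  by (metis borel_measurable_RN_deriv measurable_cong_sets sets_distr)

lemma nn_integral_split_by_label:
  fixes Y :: "'w \<Rightarrow> nat"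
  assumes M: "prob_space M" and X: "X \<in> M \<rightarrow>\<^sub>M N"
    and Y: "Y \<in> M \<rightarrow>\<^sub>M count_space UNIV" and Y_range: "\<And>\<omega>. \<omega> \<in> space M \<Longrightarrow> Y \<omega> \<in> {1..K}"
    and F: "\<And>k. k \<in> {1..K} \<Longrightarrow> (\<lambda>x. F x k) \<in> borel_measurable N"
  shows "(\<integral>\<^sup>+\<omega>. F (X \<omega>) (Y \<omega>) \<partial>M)
       = (\<integral>\<^sup>+x. (\<Sum>k=1..K. label_RN_deriv M X N Y k x * F x k) \<partial>distr M N X)"
proof -
  let ?\<mu> = "distr M N X" and ?M = "\<lambda>k. density M (indicator (Y -` {k} \<inter> space M))"
  interpret \<mu>: prob_space ?\<mu> using M X by (rule prob_space.prob_space_distr)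
  have label_set: "Y -` {k} \<inter> space M \<in> sets M" for k
    using Y by (rule measurable_sets) auto
  have "(\<integral>\<^sup>+\<omega>. F (X \<omega>) (Y \<omega>) \<partial>M)
      = (\<integral>\<^sup>+\<omega>. (\<Sum>k=1..K. indicator (Y -` {k} \<inter> space M) \<omega> * F (X \<omega>) k) \<partial>M)"
  proof (rule nn_integral_cong)
    fix \<omega> assume \<omega>: "\<omega> \<in> space M"
    show "F (X \<omega>) (Y \<omega>) = (\<Sum>k=1..K. indicator (Y -` {k} \<inter> space M) \<omega> * F (X \<omega>) k)"
      using \<omega> Y_range[OF \<omega>] by (simp add: indicator_def sum.If_cases)
  qed
  also have "\<dots> = (\<Sum>k=1..K. \<integral>\<^sup>+x. F x k \<partial>distr (?M k) N X)"
    using X F label_set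
    by (subst nn_integral_sum) (auto simp: nn_integral_distr nn_integral_density)
  also have "\<dots> = (\<Sum>k=1..K. \<integral>\<^sup>+x. label_RN_deriv M X N Y k x * F x k \<partial>?\<mu>)"
    unfolding label_RN_deriv_def using X F label_set
    by (intro sum.cong refl \<mu>.RN_deriv_nn_integral)
       (auto intro: absolutely_continuous_distr_density)
  also have "\<dots> = (\<integral>\<^sup>+x. (\<Sum>k=1..K. label_RN_deriv M X N Y k x * F x k) \<partial>?\<mu>)"
    using F borel_measurable_label_RN_deriv
    by (subst nn_integral_sum) (auto intro!: borel_measurable_times_ennreal)
  finally show ?thesis .
qed

lemma label_RN_deriv_sum_AE:
  fixes Y :: "'w \<Rightarrow> nat"
  assumes M: "prob_space M" and X: "X \<in> M \<rightarrow>\<^sub>M N"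
    and Y: "Y \<in> M \<rightarrow>\<^sub>M count_space UNIV" and Y_range: "\<And>\<omega>. \<omega> \<in> space M \<Longrightarrow> Y \<omega> \<in> {1..K}"
  shows "AE x in distr M N X. (\<Sum>k=1..K. label_RN_deriv M X N Y k x) = 1"
proof -
  let ?\<mu> = "distr M N X" and ?e = "\<lambda>x. \<Sum>k=1..K. label_RN_deriv M X N Y k x"
  interpret \<mu>: prob_space ?\<mu> using M X by (rule prob_space.prob_space_distr)
  have e: "?e \<in> borel_measurable ?\<mu>"
    by simp
  have "density ?\<mu> ?e = density ?\<mu> (\<lambda>_. 1)"
  proof (rule measure_eqI)
    fix A assume "A \<in> sets (density ?\<mu> ?e)"
    then have A: "A \<in> sets N" by simp
    have "emeasure (density ?\<mu> ?e) A = (\<integral>\<^sup>+x. (\<Sum>k=1..K. label_RN_deriv M X N Y k x * indicator A x) \<partial>?\<mu>)"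
      using A e by (simp add: emeasure_density sum_distrib_right)
    also have "\<dots> = (\<integral>\<^sup>+\<omega>. indicator A (X \<omega>) \<partial>M)"
      using nn_integral_split_by_label[OF M X Y Y_range, of "\<lambda>x k. indicator A x"] A by simp
    also have "\<dots> = emeasure (density ?\<mu> (\<lambda>_. 1)) A"
      using A X by (subst nn_integral_distr[symmetric, of X M N]) (auto simp: emeasure_density)
    finally show "emeasure (density ?\<mu> ?e) A = emeasure (density ?\<mu> (\<lambda>_. 1)) A" .
  qed simp
  then show ?thesis
    using \<mu>.density_unique[OF e] by simp
qed

text \<open>\<open>\<eta> k x\<close> is a version of the conditional probability P(Y = k | X = x), normalised to be
  a probability vector at every point.\<close>
locale label_posterior = prob_space M for M :: "'w measure" +
  fixes X :: "'w \<Rightarrow> 'a" and N :: "'a measure" and Y :: "'w \<Rightarrow> nat" and K :: nat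
    and \<eta> :: "nat \<Rightarrow> 'a \<Rightarrow> real"
  assumes measurable_X [measurable]: "X \<in> M \<rightarrow>\<^sub>M N"
    and borel_measurable_posterior [measurable]: "\<And>k. \<eta> k \<in> borel_measurable N"
    and posterior_nonneg: "\<And>k x. 0 \<le> \<eta> k x"
    and posterior_sum: "\<And>x. (\<Sum>k=1..K. \<eta> k x) = 1"
    and nn_integral_posterior:
      "\<And>F. (\<And>k. k \<in> {1..K} \<Longrightarrow> (\<lambda>x. F x k) \<in> borel_measurable N) \<Longrightarrow>
        (\<And>x k. k \<in> {1..K} \<Longrightarrow> 0 \<le> F x k) \<Longrightarrow>
        (\<integral>\<^sup>+\<omega>. ennreal (F (X \<omega>) (Y \<omega>)) \<partial>M)
          = (\<integral>\<^sup>+x. ennreal (\<Sum>k=1..K. \<eta> k x * F x k) \<partial>distr M N X)"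

abbreviation (in label_posterior) law :: "'a measure" where
  "law \<equiv> distr M N X"

text \<open>A real version of \<open>label_RN_deriv\<close>, set to the uniform distribution on the null set where
  the densities do not sum to 1.\<close>
definition cond_label_prob ::
    "'w measure \<Rightarrow> ('w \<Rightarrow> 'a) \<Rightarrow> 'a measure \<Rightarrow> ('w \<Rightarrow> nat) \<Rightarrow> nat \<Rightarrow> nat \<Rightarrow> 'a \<Rightarrow> real" where
  "cond_label_prob M X N Y K k x =
     (if (\<Sum>j=1..K. label_RN_deriv M X N Y j x) = 1 then enn2real (label_RN_deriv M X N Y k x)
      else 1 / real K)"

lemma borel_measurable_cond_label_prob [measurable]:
  "cond_label_prob M X N Y K k \<in> borel_measurable N"
  unfolding cond_label_prob_def by measurable

lemma ennreal_cond_label_prob: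
  assumes "(\<Sum>j=1..K. label_RN_deriv M X N Y j x) = 1" and "k \<in> {1..K}"
  shows "ennreal (cond_label_prob M X N Y K k x) = label_RN_deriv M X N Y k x"
proof -
  have "label_RN_deriv M X N Y k x \<le> 1"
    using assms member_le_sum[of k "{1..K}" "\<lambda>j. label_RN_deriv M X N Y j x"] by simp
  then have "label_RN_deriv M X N Y k x \<noteq> \<top>"
    by (auto simp: top_unique)
  then show ?thesis
    using assms by (simp add: cond_label_prob_def ennreal_enn2real_if)
qed

lemma sum_cond_label_prob:
  assumes "K \<ge> 1"
  shows "(\<Sum>k=1..K. cond_label_prob M X N Y K k x) = 1"
proof (cases "(\<Sum>j=1..K. label_RN_deriv M X N Y j x) = 1")
  case True
  have "ennreal (\<Sum>k=1..K. cond_label_prob M X N Y K k x)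
      = (\<Sum>k=1..K. ennreal (cond_label_prob M X N Y K k x))"
    by (rule sum_ennreal[symmetric]) (simp add: cond_label_prob_def)
  also have "\<dots> = (\<Sum>k=1..K. label_RN_deriv M X N Y k x)"
    using True by (simp add: ennreal_cond_label_prob)
  finally show ?thesis
    using True by simp
next
  case False
  with assms show ?thesis
    by (simp add: cond_label_prob_def)
qed

lemma nn_integral_cond_label_prob:
  fixes Y :: "'w \<Rightarrow> nat"
  assumes M: "prob_space M" and X: "X \<in> M \<rightarrow>\<^sub>M N"
    and Y: "Y \<in> M \<rightarrow>\<^sub>M count_space UNIV" and Y_range: "\<And>\<omega>. \<omega> \<in> space M \<Longrightarrow> Y \<omega> \<in> {1..K}"
    and F: "\<And>k. k \<in> {1..K} \<Longrightarrow> (\<lambda>x. F x k) \<in> borel_measurable N"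
    and F_nonneg: "\<And>x k. k \<in> {1..K} \<Longrightarrow> 0 \<le> F x k"
  shows "(\<integral>\<^sup>+\<omega>. ennreal (F (X \<omega>) (Y \<omega>)) \<partial>M)
       = (\<integral>\<^sup>+x. ennreal (\<Sum>k=1..K. cond_label_prob M X N Y K k x * F x k) \<partial>distr M N X)"
proof -
  let ?e = "label_RN_deriv M X N Y" and ?\<eta> = "cond_label_prob M X N Y K"
  have "(\<integral>\<^sup>+\<omega>. ennreal (F (X \<omega>) (Y \<omega>)) \<partial>M)
      = (\<integral>\<^sup>+x. (\<Sum>k=1..K. ?e k x * ennreal (F x k)) \<partial>distr M N X)"
    using F by (intro nn_integral_split_by_label[OF M X Y Y_range]) auto
  also have "\<dots> = (\<integral>\<^sup>+x. ennreal (\<Sum>k=1..K. ?\<eta> k x * F x k) \<partial>distr M N X)"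
    using label_RN_deriv_sum_AE[OF M X Y Y_range]
  proof (rule nn_integral_cong_AE[OF eventually_mono])
    fix x assume e: "(\<Sum>k=1..K. ?e k x) = 1"
    have \<eta>_nonneg: "0 \<le> ?\<eta> k x" for k
      by (simp add: cond_label_prob_def)
    have "(\<Sum>k=1..K. ?e k x * ennreal (F x k)) = (\<Sum>k=1..K. ennreal (?\<eta> k x * F x k))"
      using e by (simp add: ennreal_cond_label_prob \<eta>_nonneg ennreal_mult')
    also have "\<dots> = ennreal (\<Sum>k=1..K. ?\<eta> k x * F x k)"
      using \<eta>_nonneg F_nonneg by (intro sum_ennreal) simp
    finally show "(\<Sum>k=1..K. ?e k x * ennreal (F x k)) = ennreal (\<Sum>k=1..K. ?\<eta> k x * F x k)" .
  qed
  finally show ?thesis .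
qed

lemma label_posterior_cond_label_prob:
  fixes Y :: "'w \<Rightarrow> nat"
  assumes M: "prob_space M" and X: "X \<in> M \<rightarrow>\<^sub>M N"
    and Y: "Y \<in> M \<rightarrow>\<^sub>M count_space UNIV" and Y_range: "\<And>\<omega>. \<omega> \<in> space M \<Longrightarrow> Y \<omega> \<in> {1..K}"
    and K: "K \<ge> 1"
  shows "label_posterior M X N Y K (cond_label_prob M X N Y K)"
  unfolding label_posterior_def label_posterior_axioms_def
  using M X sum_cond_label_prob[OF K] nn_integral_cond_label_prob[OF M X Y Y_range]
  by (auto simp: cond_label_prob_def)

section \<open>Calibration of surrogate risk minimisers\<close>

lemma AE_not_in_strict_decrease_set:
  fixes f g :: "'a \<Rightarrow> ennreal"
  assumes f: "f \<in> borel_measurable M" and g: "g \<in> borel_measurable M"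
    and finite: "(\<integral>\<^sup>+x. g x \<partial>M) < \<infinity>" and minimal: "(\<integral>\<^sup>+x. g x \<partial>M) \<le> (\<integral>\<^sup>+x. f x \<partial>M)"
    and le: "\<And>x. f x \<le> g x" and less: "\<And>x. x \<in> B \<Longrightarrow> f x < g x"
  shows "AE x in M. x \<notin> B"
proof (rule ccontr)
  assume not_AE: "\<not> (AE x in M. x \<notin> B)"
  have not_AE_ge: "\<not> (AE x in M. g x \<le> f x)"
  proof
    assume "AE x in M. g x \<le> f x"
    then have "AE x in M. x \<notin> B"
      by eventually_elim (meson less leD)
    with not_AE show False ..
  qed
  have "(\<integral>\<^sup>+x. f x \<partial>M) \<le> (\<integral>\<^sup>+x. g x \<partial>M)"
    using le by (intro nn_integral_mono)
  then have "(\<integral>\<^sup>+x. f x \<partial>M) \<noteq> \<infinity>"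
    using finite by auto
  then have "(\<integral>\<^sup>+x. f x \<partial>M) < (\<integral>\<^sup>+x. g x \<partial>M)"
    using f g le not_AE_ge by (intro nn_integral_less) auto
  with minimal show False
    by simp
qed

context label_posterior
begin

lemma prob_space_law: "prob_space law"
  by (rule prob_space_distr[OF measurable_X])

lemma posterior_le_1: "k \<in> {1..K} \<Longrightarrow> \<eta> k x \<le> 1"
  using le_1_if_sum_eq_1[of "{1..K}" "\<lambda>k. \<eta> k x"] posterior_nonneg posterior_sum by simp

lemma nn_integral_phi_eq_cond_risk:
  assumes \<alpha>: "admissible_smoothing K \<alpha>" and K: "K \<ge> 2"
    and g: "\<And>k. k \<in> {1..K} \<Longrightarrow> (\<lambda>x. g x k) \<in> borel_measurable N"
  shows "(\<integral>\<^sup>+\<omega>. ennreal (phi kind K \<alpha> (g (X \<omega>)) (Y \<omega>)) \<partial>M)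
       = (\<integral>\<^sup>+x. ennreal (cond_risk kind K \<alpha> (\<lambda>k. \<eta> k x) (g x)) \<partial>law)"
  unfolding cond_risk_def
  using borel_measurable_phi[OF g] phi_nonneg[OF \<alpha> K] by (rule nn_integral_posterior)

lemma nn_integral_cond_risk_const_finite:
  assumes \<alpha>: "admissible_smoothing K \<alpha>" and K: "K \<ge> 2"
  shows "(\<integral>\<^sup>+x. ennreal (cond_risk kind K \<alpha> (\<lambda>k. \<eta> k x) v) \<partial>law) < \<infinity>"
proof -
  interpret law: prob_space law
    by (rule prob_space_law)
  have "cond_risk kind K \<alpha> (\<lambda>k. \<eta> k x) v \<le> (\<Sum>k=1..K. phi kind K \<alpha> v k)" for x
    unfolding cond_risk_def using posterior_le_1 phi_nonneg[OF \<alpha> K]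
    by (intro sum_mono) (simp add: mult_left_le_one_le posterior_nonneg)
  then have "(\<integral>\<^sup>+x. ennreal (cond_risk kind K \<alpha> (\<lambda>k. \<eta> k x) v) \<partial>law)
      \<le> (\<integral>\<^sup>+x. ennreal (\<Sum>k=1..K. phi kind K \<alpha> v k) \<partial>law)"
    by (intro nn_integral_mono ennreal_leI)
  also have "\<dots> < \<infinity>"
    using law.emeasure_space_1 by simp
  finally show ?thesis .
qed

lemma borel_measurable_cond_risk:
  assumes "\<And>k. k \<in> {1..K} \<Longrightarrow> (\<lambda>x. g x k) \<in> borel_measurable N"
  shows "(\<lambda>x. cond_risk kind K \<alpha> (\<lambda>k. \<eta> k x) (g x)) \<in> borel_measurable N"
  unfolding cond_risk_def using borel_measurable_phi[OF assms] by measurable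

lemma nn_integral_cond_risk_minimizer_finite:
  assumes \<alpha>: "admissible_smoothing K \<alpha>" and K: "K \<ge> 2"
    and gbar: "\<And>k. k \<in> {1..K} \<Longrightarrow> (\<lambda>x. gbar x k) \<in> borel_measurable N"
    and minimal: "(\<integral>\<^sup>+\<omega>. ennreal (phi kind K \<alpha> (gbar (X \<omega>)) (Y \<omega>)) \<partial>M)
                \<le> (\<integral>\<^sup>+\<omega>. ennreal (phi kind K \<alpha> (\<lambda>_. 0) (Y \<omega>)) \<partial>M)"
  shows "(\<integral>\<^sup>+x. ennreal (cond_risk kind K \<alpha> (\<lambda>k. \<eta> k x) (gbar x)) \<partial>law) < \<infinity>"
proof -
  have "(\<integral>\<^sup>+x. ennreal (cond_risk kind K \<alpha> (\<lambda>k. \<eta> k x) (gbar x)) \<partial>law)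
      = (\<integral>\<^sup>+\<omega>. ennreal (phi kind K \<alpha> (gbar (X \<omega>)) (Y \<omega>)) \<partial>M)"
    by (rule nn_integral_phi_eq_cond_risk[symmetric, OF \<alpha> K gbar])
  also note minimal
  also have "(\<integral>\<^sup>+\<omega>. ennreal (phi kind K \<alpha> (\<lambda>_. 0) (Y \<omega>)) \<partial>M)
      = (\<integral>\<^sup>+x. ennreal (cond_risk kind K \<alpha> (\<lambda>k. \<eta> k x) (\<lambda>_. 0)) \<partial>law)"
    by (rule nn_integral_phi_eq_cond_risk[OF \<alpha> K, of "\<lambda>_ _. 0"]) simp
  also have "\<dots> < \<infinity>"
    by (rule nn_integral_cond_risk_const_finite[OF \<alpha> K])
  finally show ?thesis .
qed

lemma minimizer_calibrated_AE:
  assumes \<alpha>: "admissible_smoothing K \<alpha>" and K: "K \<ge> 2"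
    and gbar: "\<And>k. k \<in> {1..K} \<Longrightarrow> (\<lambda>x. gbar x k) \<in> borel_measurable N"
    and minimal: "\<And>g. (\<And>k. k \<in> {1..K} \<Longrightarrow> (\<lambda>x. g x k) \<in> borel_measurable N) \<Longrightarrow>
      (\<integral>\<^sup>+\<omega>. ennreal (phi kind K \<alpha> (gbar (X \<omega>)) (Y \<omega>)) \<partial>M)
        \<le> (\<integral>\<^sup>+\<omega>. ennreal (phi kind K \<alpha> (g (X \<omega>)) (Y \<omega>)) \<partial>M)"
  shows "AE x in law. \<forall>j\<in>{1..K}. qL K (gbar x) j = target_probs kind K \<alpha> (\<lambda>k. \<eta> k x) j"
proof -
  let ?t = "\<lambda>x. target_probs kind K \<alpha> (\<lambda>k. \<eta> k x)"
  let ?R = "\<lambda>g x. ennreal (cond_risk kind K \<alpha> (\<lambda>k. \<eta> k x) (g x))"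
  define B where "B = {x \<in> space N. \<exists>j\<in>{1..K}. qL K (gbar x) j \<noteq> ?t x j}"
  \<comment> \<open>Repairing gbar on B strictly lowers the conditional risk there (\<open>cond_risk_midpoint_less\<close>).\<close>
  define g' where "g' x = (if x \<in> B then midpoint_scores K (gbar x) (?t x) else gbar x)" for x
  note [measurable] = borel_measurable_qL[OF gbar] gbar
  have [measurable]: "(\<lambda>x. ?t x j) \<in> borel_measurable N" for j
    unfolding target_probs_def s_al_def by measurable
  have [measurable]: "B \<in> sets N"
    unfolding B_def by measurable
  have g': "(\<lambda>x. g' x k) \<in> borel_measurable N" if "k \<in> {1..K}" for k
  proof -
    have "(\<lambda>x. g' x k) = (\<lambda>x. if x \<in> B then ln ((qL K (gbar x) k + ?t x k) / 2) else gbar x k)"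
      by (simp add: g'_def midpoint_scores_def fun_eq_iff)
    with that show ?thesis
      by simp
  qed
  have "AE x in law. x \<notin> B"
  proof (rule AE_not_in_strict_decrease_set)
    show "?R g' \<in> borel_measurable law" "?R gbar \<in> borel_measurable law"
      using borel_measurable_cond_risk[OF g'] borel_measurable_cond_risk[OF gbar] by simp_all
    show "(\<integral>\<^sup>+x. ?R gbar x \<partial>law) < \<infinity>"
      using minimal[of "\<lambda>_ _. 0"] by (intro nn_integral_cond_risk_minimizer_finite[OF \<alpha> K gbar]) auto
    show "(\<integral>\<^sup>+x. ?R gbar x \<partial>law) \<le> (\<integral>\<^sup>+x. ?R g' x \<partial>law)"
      using minimal[of g', OF g']
      by (simp only: nn_integral_phi_eq_cond_risk[OF \<alpha> K gbar] nn_integral_phi_eq_cond_risk[OF \<alpha> K g'])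
    show less: "?R g' x < ?R gbar x" if "x \<in> B" for x
      using that cond_risk_midpoint_less[OF \<alpha> K posterior_nonneg posterior_sum]
        cond_risk_nonneg[OF \<alpha> K posterior_nonneg]
      by (simp add: g'_def B_def ennreal_less_iff)
    then show "?R g' x \<le> ?R gbar x" for x
      by (cases "x \<in> B") (auto simp: g'_def less_imp_le)
  qed
  with AE_space show ?thesis
    by eventually_elim (auto simp: B_def)
qed

lemma nn_integral_loss_eq:
  assumes loss: "\<And>l k. l \<in> {1..K} \<Longrightarrow> k \<in> {1..K} \<Longrightarrow> 0 \<le> loss l k"
    and f: "f \<in> N \<rightarrow>\<^sub>M count_space UNIV" and f_range: "\<And>x. f x \<in> {1..K}"
  shows "(\<integral>\<^sup>+\<omega>. ennreal (loss (f (X \<omega>)) (Y \<omega>)) \<partial>M)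
       = (\<integral>\<^sup>+x. ennreal (\<Sum>k=1..K. \<eta> k x * loss (f x) k) \<partial>law)"
  using loss f_range by (intro nn_integral_posterior measurable_compose[OF f]) auto

lemma plug_in_classifier_le:
  assumes loss: "\<And>l k. l \<in> {1..K} \<Longrightarrow> k \<in> {1..K} \<Longrightarrow> 0 \<le> loss l k"
    and c: "c \<in> N \<rightarrow>\<^sub>M count_space UNIV" "\<And>x. c x \<in> {1..K}"
    and f: "f \<in> N \<rightarrow>\<^sub>M count_space UNIV" "\<And>x. f x \<in> {1..K}"
    and bayes: "AE x in law. \<forall>l\<in>{1..K}.
      (\<Sum>k=1..K. \<eta> k x * loss (c x) k) \<le> (\<Sum>k=1..K. \<eta> k x * loss l k)"
  shows "(\<integral>\<^sup>+\<omega>. ennreal (loss (c (X \<omega>)) (Y \<omega>)) \<partial>M)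
       \<le> (\<integral>\<^sup>+\<omega>. ennreal (loss (f (X \<omega>)) (Y \<omega>)) \<partial>M)"
proof -
  have "(\<integral>\<^sup>+\<omega>. ennreal (loss (c (X \<omega>)) (Y \<omega>)) \<partial>M)
      = (\<integral>\<^sup>+x. ennreal (\<Sum>k=1..K. \<eta> k x * loss (c x) k) \<partial>law)"
    by (rule nn_integral_loss_eq[OF loss c])
  also have "\<dots> \<le> (\<integral>\<^sup>+x. ennreal (\<Sum>k=1..K. \<eta> k x * loss (f x) k) \<partial>law)"
    using bayes by (rule nn_integral_mono_AE[OF eventually_mono]) (use f(2) in \<open>auto intro: ennreal_leI\<close>)
  also have "\<dots> = (\<integral>\<^sup>+\<omega>. ennreal (loss (f (X \<omega>)) (Y \<omega>)) \<partial>M)"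
    by (rule nn_integral_loss_eq[OF loss f, symmetric])
  finally show ?thesis .
qed

end

theorem proposition2:
  fixes M :: "'w measure" and X :: "'w \<Rightarrow> real^'d" and Y :: "'w \<Rightarrow> nat"
    and K :: nat and \<alpha> :: real and loss :: "nat \<Rightarrow> nat \<Rightarrow> real"
    and kind :: loss_kind and gbar :: "real^'d \<Rightarrow> nat \<Rightarrow> real"
    and h :: "(nat \<Rightarrow> real) \<Rightarrow> nat"
  assumes "prob_space M"
    and "K \<ge> 2"
    and "X \<in> borel_measurable M"
    and "Y \<in> M \<rightarrow>\<^sub>M count_space UNIV"
    and "\<forall>\<omega>\<in>space M. Y \<omega> \<in> {1..K}"
    and "\<forall>l\<in>{1..K}. \<forall>k\<in>{1..K}. loss l k \<ge> 0"
    and "(0 \<le> \<alpha> \<and> \<alpha> < 1) \<or> (1 < \<alpha> \<and> \<alpha> \<le> real K / (real K - 1))"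
    and "gbar \<in> score_fns K"
    and "\<forall>g\<in>score_fns K.
           (\<integral>\<^sup>+\<omega>. ennreal (phi kind K \<alpha> (gbar (X \<omega>)) (Y \<omega>)) \<partial>M)
         \<le> (\<integral>\<^sup>+\<omega>. ennreal (phi kind K \<alpha> (g (X \<omega>)) (Y \<omega>)) \<partial>M)"
    and "\<forall>v. h v \<in> {1..K} \<and>
           (\<forall>l\<in>{1..K}. (\<Sum>k=1..K. qdec kind K \<alpha> v k * loss (h v) k)
                      \<le> (\<Sum>k=1..K. qdec kind K \<alpha> v k * loss l k))"
    and "(\<lambda>x. h (gbar x)) \<in> borel \<rightarrow>\<^sub>M count_space UNIV"
  shows "(\<integral>\<^sup>+\<omega>. ennreal (loss (h (gbar (X \<omega>))) (Y \<omega>)) \<partial>M)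
       = (INF f\<in>classifiers K. \<integral>\<^sup>+\<omega>. ennreal (loss (f (X \<omega>)) (Y \<omega>)) \<partial>M)"
proof -
  define \<eta> where "\<eta> = cond_label_prob M X borel Y K"
  interpret label_posterior M X borel Y K \<eta>
    unfolding \<eta>_def using assms(1-5) by (intro label_posterior_cond_label_prob) auto
  have \<alpha>: "admissible_smoothing K \<alpha>"
    using assms(7) by (simp add: admissible_smoothing_def)
  have "AE x in law. \<forall>j\<in>{1..K}. qL K (gbar x) j = target_probs kind K \<alpha> (\<lambda>k. \<eta> k x) j"
    using assms(8,9) by (intro minimizer_calibrated_AE[OF \<alpha> assms(2)]) (auto simp: score_fns_def)
  then have bayes: "AE x in law. \<forall>l\<in>{1..K}.
      (\<Sum>k=1..K. \<eta> k x * loss (h (gbar x)) k) \<le> (\<Sum>k=1..K. \<eta> k x * loss l k)"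
  proof (rule eventually_mono)
    fix x assume "\<forall>j\<in>{1..K}. qL K (gbar x) j = target_probs kind K \<alpha> (\<lambda>k. \<eta> k x) j"
    then have qdec_eq: "(\<Sum>k=1..K. qdec kind K \<alpha> (gbar x) k * loss l k) = (\<Sum>k=1..K. \<eta> k x * loss l k)"
      for l by (rule sum_qdec_mult_if_calibrated[OF admissible_smoothing_ne_1[OF \<alpha>]])
    show "\<forall>l\<in>{1..K}. (\<Sum>k=1..K. \<eta> k x * loss (h (gbar x)) k) \<le> (\<Sum>k=1..K. \<eta> k x * loss l k)"
      using assms(10) unfolding qdec_eq[symmetric] by blast
  qed
  have "(\<lambda>x. h (gbar x)) \<in> classifiers K"
    using assms(10,11) by (simp add: classifiers_def)
  moreover have "(\<integral>\<^sup>+\<omega>. ennreal (loss (h (gbar (X \<omega>))) (Y \<omega>)) \<partial>M)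
      \<le> (\<integral>\<^sup>+\<omega>. ennreal (loss (f (X \<omega>)) (Y \<omega>)) \<partial>M)" if "f \<in> classifiers K" for f
    using that assms(6,10,11) bayes by (intro plug_in_classifier_le) (auto simp: classifiers_def)
  ultimately show ?thesis
    by (intro antisym INF_greatest INF_lower)
qed

end
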